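(* Let $K$ be a field, $P=K[x_1,\dots,x_n]$, $\sigma$ a term ordering on $\mathbb{T}^n$, and let $I,J$ be ideals in $P$. If $I\subsetneq J$ then $O_\sigma(J)\prec_\sigma O_\sigma(I)$.
   Context: $\mathbb{T}^n$ is the monoid of power-products in $x_1,\dots,x_n$. A tuple $(t_1,\dots,t_r)$ of distinct power-products is $\sigma$-ordered if $t_1<_\sigma\cdots<_\sigma t_r$ (the empty tuple is $\sigma$-ordered). For an ideal $I$, $O_\sigma(I)$ is the $\sigma$-ordered tuple of the leading terms of a minimal $\sigma$-Gröbner basis of $I$ (equivalently, the minimal power-product generators of $\mathrm{LT}_\sigma(I)$ in increasing $\sigma$-order); it is the empty tuple if $I=0$. For $\sigma$-ordered tuples $T=(t_1,\dots,t_r)$ and $T'=(t'_1,\dots,t'_{r'})$, $T'\prec_\sigma T$ means either $T$ is a proper prefix of $T'$ (i.e. $r<r'$ and $t_i=t'_i$ for $i\le r$), or there is $k\le\min(r,r')$ with $t_i=t'_i$ for $i<k$ and $t'_k<_\sigma t_k$. *)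

theory Defs
  imports Main "HOL-Library.Poly_Mapping"
begin

(* Power-products in the variables x_0,...,x_{n-1}: exponent vectors
  (nat \<Rightarrow>\<^sub>0 nat) whose support lies in {..<n}; multiplication of
  power-products is addition of exponent vectors, 1 is 0.
  Polynomials over a field 'a are finitely supported maps from power-products
  to coefficients, with the convolution product of Poly_Mapping. *)

type_synonym pp = "nat \<Rightarrow>\<^sub>0 nat"
type_synonym 'a mpoly = "pp \<Rightarrow>\<^sub>0 'a"

definition Tn :: "nat \<Rightarrow> pp set" where
  "Tn n = {t. Poly_Mapping.keys t \<subseteq> {..<n}}"

definition Pn :: "nat \<Rightarrow> ('a::zero) mpoly set" where
  "Pn n = {f. Poly_Mapping.keys f \<subseteq> Tn n}"

definition pp_dvd :: "pp \<Rightarrow> pp \<Rightarrow> bool" where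
  "pp_dvd s t \<longleftrightarrow> (\<forall>i. Poly_Mapping.lookup s i \<le> Poly_Mapping.lookup t i)"

definition term_ordering :: "nat \<Rightarrow> (pp \<Rightarrow> pp \<Rightarrow> bool) \<Rightarrow> bool" where
  "term_ordering n lt \<longleftrightarrow>
     (\<forall>s t. lt s t \<longrightarrow> s \<in> Tn n \<and> t \<in> Tn n) \<and>
     (\<forall>t \<in> Tn n. \<not> lt t t) \<and>
     (\<forall>s \<in> Tn n. \<forall>t \<in> Tn n. \<forall>u \<in> Tn n. lt s t \<longrightarrow> lt t u \<longrightarrow> lt s u) \<and>
     (\<forall>s \<in> Tn n. \<forall>t \<in> Tn n. s = t \<or> lt s t \<or> lt t s) \<and>
     (\<forall>s \<in> Tn n. \<forall>t \<in> Tn n. \<forall>u \<in> Tn n. lt s t \<longrightarrow> lt (s + u) (t + u)) \<and>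
     (\<forall>t \<in> Tn n. t = 0 \<or> lt 0 t)"

definition is_ideal :: "nat \<Rightarrow> ('a::comm_ring_1) mpoly set \<Rightarrow> bool" where
  "is_ideal n I \<longleftrightarrow> I \<subseteq> Pn n \<and> 0 \<in> I \<and>
     (\<forall>f \<in> I. \<forall>g \<in> I. f + g \<in> I) \<and>
     (\<forall>f \<in> I. \<forall>g \<in> Pn n. g * f \<in> I)"

definition LT :: "(pp \<Rightarrow> pp \<Rightarrow> bool) \<Rightarrow> ('a::zero) mpoly \<Rightarrow> pp" where
  "LT lt f = (THE t. t \<in> Poly_Mapping.keys f \<and> (\<forall>s \<in> Poly_Mapping.keys f. s = t \<or> lt s t))"

(* Power-products in LT_sigma(I) (the leading terms of nonzero elements of I). *)
definition LTs :: "(pp \<Rightarrow> pp \<Rightarrow> bool) \<Rightarrow> ('a::zero) mpoly set \<Rightarrow> pp set" where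
  "LTs lt I = {LT lt f | f. f \<in> I \<and> f \<noteq> 0}"

definition min_gens :: "(pp \<Rightarrow> pp \<Rightarrow> bool) \<Rightarrow> ('a::zero) mpoly set \<Rightarrow> pp set" where
  "min_gens lt I = {t \<in> LTs lt I. \<forall>s \<in> LTs lt I. pp_dvd s t \<longrightarrow> s = t}"

definition O_sigma :: "(pp \<Rightarrow> pp \<Rightarrow> bool) \<Rightarrow> ('a::zero) mpoly set \<Rightarrow> pp list" where
  "O_sigma lt I = (THE xs. sorted_wrt lt xs \<and> set xs = min_gens lt I)"

definition tuple_prec :: "(pp \<Rightarrow> pp \<Rightarrow> bool) \<Rightarrow> pp list \<Rightarrow> pp list \<Rightarrow> bool" where
  "tuple_prec lt T' T \<longleftrightarrow>
     (length T < length T' \<and> take (length T) T' = T) \<or>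
     (\<exists>k < min (length T) (length T'). take k T' = take k T \<and> lt (T' ! k) (T ! k))"

end

theory Submission
  imports Defs
begin

text \<open>For ideals \<open>I \<subset> J\<close> the monomial ideals of leading terms satisfy
  \<open>LT(I) \<subset> LT(J)\<close>: an element of \<open>J - I\<close> with \<open>\<sigma>\<close>-least leading term could otherwise be
  reduced by an element of \<open>I\<close> with the same leading term, staying in \<open>J - I\<close> and lowering
  its leading term. Let \<open>t\<close> be the \<open>\<sigma>\<close>-least minimal generator of \<open>LT(J)\<close> outside \<open>LT(I)\<close>.
  Below \<open>t\<close> the minimal generators of \<open>LT(I)\<close> and \<open>LT(J)\<close> coincide, so \<open>O(J)\<close> and
  \<open>O(I)\<close> share the prefix of generators below \<open>t\<close>, after which \<open>O(J)\<close> continues with \<open>t\<close> while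
  \<open>O(I)\<close> stops or continues with a larger term.\<close>

locale strict_total_on =
  fixes A :: "'a set" and r :: "'a \<Rightarrow> 'a \<Rightarrow> bool"
  assumes irrefl: "x \<in> A \<Longrightarrow> \<not> r x x"
    and trans: "x \<in> A \<Longrightarrow> y \<in> A \<Longrightarrow> z \<in> A \<Longrightarrow> r x y \<Longrightarrow> r y z \<Longrightarrow> r x z"
    and total: "x \<in> A \<Longrightarrow> y \<in> A \<Longrightarrow> x = y \<or> r x y \<or> r y x"
begin

lemma finite_has_least:
  assumes "finite X" "X \<noteq> {}" "X \<subseteq> A"
  shows "\<exists>m\<in>X. \<forall>x\<in>X. m = x \<or> r m x"
  using assms
proof (induction X rule: finite_ne_induct)
  case (insert x F)
  then obtain m where m: "m \<in> F" "\<forall>y\<in>F. m = y \<or> r m y" by auto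
  have "x = m \<or> r x m \<or> r m x" using total insert.prems m(1) by auto
  then show ?case
  proof (elim disjE)
    assume "r x m"
    then have "\<forall>y\<in>insert x F. x = y \<or> r x y" using m insert.prems trans[of x m] by fastforce
    then show ?thesis by blast
  qed (use m in auto)
qed simp

lemma dual: "strict_total_on A (\<lambda>x y. r y x)"
  by unfold_locales (auto intro: trans dest: irrefl total)

lemma finite_has_greatest:
  assumes "finite X" "X \<noteq> {}" "X \<subseteq> A"
  shows "\<exists>m\<in>X. \<forall>x\<in>X. m = x \<or> r x m"
  using strict_total_on.finite_has_least[OF dual assms] .

lemma ex_sorted_list:
  assumes "finite X" "X \<subseteq> A"
  shows "\<exists>xs. sorted_wrt r xs \<and> set xs = X"
  using assms
proof (induction X rule: finite_psubset_induct)
  case (psubset X)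
  show ?case
  proof (cases "X = {}")
    case False
    then obtain m where m: "m \<in> X" "\<forall>x\<in>X. m = x \<or> r m x"
      using finite_has_least psubset.hyps(1) psubset.prems by blast
    obtain xs where "sorted_wrt r xs" "set xs = X - {m}"
      using psubset.IH[of "X - {m}"] psubset.prems m(1) by blast
    then have "sorted_wrt r (m # xs) \<and> set (m # xs) = X" using m by auto
    then show ?thesis by blast
  qed simp
qed

lemma sorted_list_unique:
  assumes "sorted_wrt r xs" "sorted_wrt r ys" "set xs = set ys" "set xs \<subseteq> A"
  shows "xs = ys"
  using assms
proof (induction xs arbitrary: ys)
  case (Cons x xs)
  then obtain y ys' where ys: "ys = y # ys'" by (cases ys) auto
  have "x = y"
  proof (rule ccontr)
    assume "x \<noteq> y"
    then have "r x y" "r y x" using Cons.prems ys by auto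
    moreover have "x \<in> A" "y \<in> A" using Cons.prems(3,4) ys by auto
    ultimately show False using trans[of x y x] irrefl[of x] by blast
  qed
  moreover have "x \<notin> set xs" "y \<notin> set ys'" using Cons.prems ys irrefl by fastforce+
  ultimately have "set xs = set ys'" using Cons.prems(3) ys insert_ident by (metis list.set(2))
  then show ?case using Cons.IH[of ys'] Cons.prems \<open>x = y\<close> ys by auto
qed simp

lemma set_takeWhile_sorted:
  assumes "sorted_wrt r xs" "set xs \<subseteq> A" "t \<in> A"
  shows "set (takeWhile (\<lambda>x. r x t) xs) = {x \<in> set xs. r x t}"
  using assms
proof (induction xs)
  case (Cons x xs)
  then show ?case using trans[of x _ t] by auto
qed simp

lemma sorted_lists_split_at:
  assumes xs: "sorted_wrt r xs" "set xs \<subseteq> A" and ys: "sorted_wrt r ys" "set ys \<subseteq> A"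
    and t: "t \<in> set ys" "t \<notin> set xs"
    and below: "{x \<in> set xs. r x t} = {y \<in> set ys. r y t}"
  obtains p zs where "ys = p @ t # zs" "xs = p \<or> (\<exists>a zs'. xs = p @ a # zs' \<and> r t a)"
proof -
  let ?below = "\<lambda>x. r x t"
  define p where "p = takeWhile ?below ys"
  have tA: "t \<in> A" using t ys by auto
  have "takeWhile ?below xs = p"
    unfolding p_def using below xs ys tA
    by (intro sorted_list_unique) (auto simp: set_takeWhile_sorted dest: set_takeWhileD)
  then have xs_split: "xs = p @ dropWhile ?below xs" by (metis takeWhile_dropWhile_id)
  have "t \<in> set (dropWhile ?below ys)"
    using t irrefl[OF tA] by (metis set_takeWhileD takeWhile_dropWhile_id Un_iff set_append)
  then obtain h zs where hzs: "dropWhile ?below ys = h # zs" by (cases "dropWhile ?below ys") auto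
  have "\<not> r h t" using hzs by (metis dropWhile_eq_Cons_conv)
  moreover have "sorted_wrt r (h # zs)" using sorted_wrt_dropWhile[OF ys(1)] hzs by metis
  then have "t = h \<or> r h t" using \<open>t \<in> set (dropWhile ?below ys)\<close> hzs by auto
  ultimately have ys_split: "ys = p @ t # zs" unfolding p_def using hzs by (metis takeWhile_dropWhile_id)
  show ?thesis
  proof (cases "dropWhile ?below xs")
    case Nil
    then have "xs = p" using xs_split by (metis append.right_neutral)
    then show ?thesis using that ys_split by blast
  next
    case (Cons a zs')
    have "\<not> r a t" using Cons by (metis dropWhile_eq_Cons_conv)
    moreover have "a \<in> set xs" using Cons set_dropWhileD by (metis list.set_intros(1))
    then have "a \<in> A" "a \<noteq> t" using xs(2) t(2) by auto
    ultimately have "r t a" using total tA by blast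
    then show ?thesis using that ys_split xs_split Cons by auto
  qed
qed

end

lemma pp_dvd_refl [simp]: "pp_dvd t t"
  unfolding pp_dvd_def by simp

lemma pp_dvd_trans: "pp_dvd s t \<Longrightarrow> pp_dvd t u \<Longrightarrow> pp_dvd s u"
  unfolding pp_dvd_def using order_trans by blast

lemma pp_dvd_antisym: "pp_dvd s t \<Longrightarrow> pp_dvd t s \<Longrightarrow> s = t"
  unfolding pp_dvd_def by (rule poly_mapping_eqI) (meson le_antisym)

lemma pp_dvd_iff_add: "pp_dvd s t \<longleftrightarrow> t = (t - s) + s"
  unfolding pp_dvd_def
  by (metis le_add2 diff_add lookup_add lookup_minus poly_mapping_eqI)

definition pp_degree :: "pp \<Rightarrow> nat" where
  "pp_degree t = (\<Sum>i\<in>Poly_Mapping.keys t. Poly_Mapping.lookup t i)"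

lemma pp_dvd_degree_less:
  assumes "pp_dvd s t" "s \<noteq> t"
  shows "pp_degree s < pp_degree t"
proof -
  have le: "Poly_Mapping.lookup s i \<le> Poly_Mapping.lookup t i" for i
    using assms(1) unfolding pp_dvd_def by blast
  have keys: "Poly_Mapping.keys s \<subseteq> Poly_Mapping.keys t"
  proof
    fix i assume "i \<in> Poly_Mapping.keys s"
    then show "i \<in> Poly_Mapping.keys t" using le[of i] by (simp add: in_keys_iff)
  qed
  obtain i where "Poly_Mapping.lookup s i \<noteq> Poly_Mapping.lookup t i"
    using assms(2) by (meson poly_mapping_eqI)
  then have i: "Poly_Mapping.lookup s i < Poly_Mapping.lookup t i" "i \<in> Poly_Mapping.keys t"
    using le[of i] by (auto simp: in_keys_iff)
  have "(\<Sum>i\<in>Poly_Mapping.keys s. Poly_Mapping.lookup s i) = (\<Sum>i\<in>Poly_Mapping.keys t. Poly_Mapping.lookup s i)"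
    using keys by (intro sum.mono_neutral_left) (auto simp: in_keys_iff)
  also have "\<dots> < (\<Sum>i\<in>Poly_Mapping.keys t. Poly_Mapping.lookup t i)"
    using le i by (intro sum_strict_mono_ex1) auto
  finally show ?thesis unfolding pp_degree_def .
qed

definition dvd_minimal :: "pp set \<Rightarrow> pp set" where
  "dvd_minimal X = {t \<in> X. \<forall>s\<in>X. pp_dvd s t \<longrightarrow> s = t}"

lemma ex_dvd_minimal_dvd:
  assumes "x \<in> X"
  obtains m where "m \<in> dvd_minimal X" "pp_dvd m x"
proof -
  obtain m where m: "m \<in> X" "pp_dvd m x"
    and least: "\<And>s. s \<in> X \<Longrightarrow> pp_dvd s x \<Longrightarrow> pp_degree m \<le> pp_degree s"
    using ex_has_least_nat[of "\<lambda>s. s \<in> X \<and> pp_dvd s x" x pp_degree] assms by auto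
  have "s = m" if "s \<in> X" "pp_dvd s m" for s
  proof (rule ccontr)
    assume "s \<noteq> m"
    with that(2) have "pp_degree s < pp_degree m" by (rule pp_dvd_degree_less)
    moreover have "pp_degree m \<le> pp_degree s" using least that m(2) pp_dvd_trans by blast
    ultimately show False by simp
  qed
  then have "m \<in> dvd_minimal X" using m(1) unfolding dvd_minimal_def by blast
  then show ?thesis using that m(2) by blast
qed

definition pp_antichain :: "pp set \<Rightarrow> bool" where
  "pp_antichain S \<longleftrightarrow> (\<forall>s\<in>S. \<forall>t\<in>S. pp_dvd s t \<longrightarrow> s = t)"

lemma pp_antichain_dvd_minimal: "pp_antichain (dvd_minimal X)"
  unfolding pp_antichain_def dvd_minimal_def by blast

lemma lookup_minus_single:
  "Poly_Mapping.lookup (s - Poly_Mapping.single i c) j =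
     (if j = i then Poly_Mapping.lookup s i - c else Poly_Mapping.lookup s j)"
  by (simp add: lookup_minus lookup_single when_def)

lemma pp_antichain_slice:
  assumes S: "pp_antichain S" and c: "\<forall>s\<in>S. Poly_Mapping.lookup s i = c"
  defines "g \<equiv> \<lambda>s. s - Poly_Mapping.single i c"
  shows "inj_on g S" "pp_antichain (g ` S)"
    "\<And>s. s \<in> S \<Longrightarrow> Poly_Mapping.keys (g s) = Poly_Mapping.keys s - {i}"
proof -
  have dvd_iff: "pp_dvd (g s) (g t) \<longleftrightarrow> pp_dvd s t" if "s \<in> S" "t \<in> S" for s t
  proof -
    have "Poly_Mapping.lookup (g s) j \<le> Poly_Mapping.lookup (g t) j
        \<longleftrightarrow> Poly_Mapping.lookup s j \<le> Poly_Mapping.lookup t j" for j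
      using c that by (simp add: g_def lookup_minus_single)
    then show ?thesis unfolding pp_dvd_def by blast
  qed
  show "inj_on g S"
  proof (rule inj_onI)
    fix s t assume "s \<in> S" "t \<in> S" "g s = g t"
    then show "s = t" using dvd_iff[of s t] dvd_iff[of t s] pp_dvd_antisym[of s t] by simp
  qed
  show "pp_antichain (g ` S)"
    using S dvd_iff unfolding pp_antichain_def by auto
  show "Poly_Mapping.keys (g s) = Poly_Mapping.keys s - {i}" if "s \<in> S" for s
    using c that unfolding g_def by (auto simp: in_keys_iff lookup_minus_single split: if_splits)
qed

lemma finite_pp_antichain:
  "finite V \<Longrightarrow> \<forall>s\<in>S. Poly_Mapping.keys s \<subseteq> V \<Longrightarrow> pp_antichain S \<Longrightarrow> finite S"
proof (induction V arbitrary: S rule: finite_psubset_induct)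
  case (psubset V)
  show ?case
  proof (cases "S = {}")
    case False
    then obtain a where a: "a \<in> S" by blast
    define slice where "slice i c = {s \<in> S. Poly_Mapping.lookup s i = c}" for i c
    have cover: "S \<subseteq> insert a (\<Union>i\<in>V. \<Union>c<Poly_Mapping.lookup a i. slice i c)"
    proof
      fix s assume s: "s \<in> S"
      show "s \<in> insert a (\<Union>i\<in>V. \<Union>c<Poly_Mapping.lookup a i. slice i c)"
      proof (cases "pp_dvd a s")
        case True
        then show ?thesis using psubset.prems(2) a s unfolding pp_antichain_def by blast
      next
        case False
        then obtain i where "Poly_Mapping.lookup s i < Poly_Mapping.lookup a i"
          unfolding pp_dvd_def by (meson not_le)
        moreover have "i \<in> V" using calculation a psubset.prems(1) by (fastforce simp: in_keys_iff)
        ultimately show ?thesis using s unfolding slice_def by blast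
      qed
    qed
    have slice_finite: "finite (slice i c)" if i: "i \<in> V" for i c
    proof -
      have anti: "pp_antichain (slice i c)"
        using psubset.prems(2) unfolding pp_antichain_def slice_def by blast
      have same: "\<forall>s\<in>slice i c. Poly_Mapping.lookup s i = c" unfolding slice_def by blast
      note g = pp_antichain_slice[OF anti same]
      have "finite ((\<lambda>s. s - Poly_Mapping.single i c) ` slice i c)"
        using psubset.prems(1) i g(2,3) unfolding slice_def
        by (intro psubset.IH[of "V - {i}"]) auto
      then show ?thesis using g(1) finite_imageD by blast
    qed
    have "finite (insert a (\<Union>i\<in>V. \<Union>c<Poly_Mapping.lookup a i. slice i c))"
      using psubset.hyps(1) slice_finite by simp
    then show ?thesis using cover finite_subset by blast
  qed simp
qed

lemma finite_dvd_minimal: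
  assumes "X \<subseteq> Tn n"
  shows "finite (dvd_minimal X)"
proof (rule finite_pp_antichain[of "{..<n}"])
  show "\<forall>s\<in>dvd_minimal X. Poly_Mapping.keys s \<subseteq> {..<n}"
    using assms by (auto simp: Tn_def dvd_minimal_def)
qed (simp_all add: pp_antichain_dvd_minimal)

lemma Tn_minus:
  assumes "t \<in> Tn n"
  shows "t - s \<in> Tn n"
proof -
  have "Poly_Mapping.keys (t - s) \<subseteq> Poly_Mapping.keys t" by (auto simp: in_keys_iff lookup_minus)
  then show ?thesis using assms unfolding Tn_def by blast
qed

lemma lookup_single_mult_plus:
  fixes f :: "('a::comm_semiring_1) mpoly"
  shows "Poly_Mapping.lookup (Poly_Mapping.single u c * f) (u + s) = c * Poly_Mapping.lookup f s"
proof -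
  have "(\<lambda>l. Poly_Mapping.lookup (Poly_Mapping.single u c) l * (\<Sum>q. Poly_Mapping.lookup f q when u + s = l + q))
     = (\<lambda>l. (c * (\<Sum>q. Poly_Mapping.lookup f q when u + s = u + q)) when u = l)"
    by (auto simp: lookup_single fun_eq_iff when_def)
  then have "Poly_Mapping.lookup (Poly_Mapping.single u c * f) (u + s)
      = c * (\<Sum>q. Poly_Mapping.lookup f q when u + s = u + q)"
    unfolding lookup_mult by (simp only:) simp
  also have "(\<lambda>q. Poly_Mapping.lookup f q when u + s = u + q) = (\<lambda>q. Poly_Mapping.lookup f q when s = q)"
    by (simp add: fun_eq_iff)
  finally show ?thesis by simp
qed

lemma keys_single_mult:
  "Poly_Mapping.keys (Poly_Mapping.single u c * f) \<subseteq> (+) u ` Poly_Mapping.keys (f :: ('a::comm_semiring_1) mpoly)"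
  using keys_mult[of "Poly_Mapping.single u c" f] by (auto split: if_splits)

lemma ideal_keys: "is_ideal n I \<Longrightarrow> f \<in> I \<Longrightarrow> Poly_Mapping.keys f \<subseteq> Tn n"
  unfolding is_ideal_def Pn_def by blast

lemma ideal_zero: "is_ideal n I \<Longrightarrow> 0 \<in> I"
  unfolding is_ideal_def by blast

lemma ideal_add: "is_ideal n I \<Longrightarrow> f \<in> I \<Longrightarrow> g \<in> I \<Longrightarrow> f + g \<in> I"
  unfolding is_ideal_def by blast

lemma ideal_single_mult:
  "is_ideal n I \<Longrightarrow> f \<in> I \<Longrightarrow> u \<in> Tn n \<Longrightarrow> Poly_Mapping.single u c * f \<in> I"
  unfolding is_ideal_def Pn_def by auto

lemma ideal_diff:
  fixes I :: "('a::comm_ring_1) mpoly set"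
  assumes "is_ideal n I" "f \<in> I" "g \<in> I"
  shows "f - g \<in> I"
proof -
  have "Poly_Mapping.single 0 (- 1) * g \<in> I"
    using assms by (intro ideal_single_mult) (auto simp: Tn_def)
  then have "- g \<in> I" by (simp add: single_uminus)
  then show ?thesis using ideal_add[OF assms(1,2)] by (metis diff_conv_add_uminus)
qed

locale term_order =
  fixes n :: nat and lt :: "pp \<Rightarrow> pp \<Rightarrow> bool"
  assumes term_ordering: "term_ordering n lt"
begin

lemma lt_in_Tn: "lt s t \<Longrightarrow> s \<in> Tn n \<and> t \<in> Tn n"
proof -
  have "\<forall>s t. lt s t \<longrightarrow> s \<in> Tn n \<and> t \<in> Tn n"
    using term_ordering unfolding term_ordering_def by argo
  then show "lt s t \<Longrightarrow> s \<in> Tn n \<and> t \<in> Tn n" by blast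
qed

lemma lt_irrefl: "\<not> lt t t"
proof -
  have "\<forall>t\<in>Tn n. \<not> lt t t" using term_ordering unfolding term_ordering_def by argo
  then show ?thesis using lt_in_Tn by blast
qed

lemma lt_trans: "lt s t \<Longrightarrow> lt t u \<Longrightarrow> lt s u"
proof -
  have "\<forall>s\<in>Tn n. \<forall>t\<in>Tn n. \<forall>u\<in>Tn n. lt s t \<longrightarrow> lt t u \<longrightarrow> lt s u"
    using term_ordering unfolding term_ordering_def by argo
  then show "lt s t \<Longrightarrow> lt t u \<Longrightarrow> lt s u" using lt_in_Tn by blast
qed

lemma lt_total: "s \<in> Tn n \<Longrightarrow> t \<in> Tn n \<Longrightarrow> s = t \<or> lt s t \<or> lt t s"
proof -
  have "\<forall>s\<in>Tn n. \<forall>t\<in>Tn n. s = t \<or> lt s t \<or> lt t s"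
    using term_ordering unfolding term_ordering_def by argo
  then show "s \<in> Tn n \<Longrightarrow> t \<in> Tn n \<Longrightarrow> s = t \<or> lt s t \<or> lt t s" by blast
qed

lemma lt_plus_mono: "lt s t \<Longrightarrow> u \<in> Tn n \<Longrightarrow> lt (s + u) (t + u)"
proof -
  have "\<forall>s\<in>Tn n. \<forall>t\<in>Tn n. \<forall>u\<in>Tn n. lt s t \<longrightarrow> lt (s + u) (t + u)"
    using term_ordering unfolding term_ordering_def by argo
  then show "lt s t \<Longrightarrow> u \<in> Tn n \<Longrightarrow> lt (s + u) (t + u)" using lt_in_Tn by blast
qed

lemma zero_least: "t \<in> Tn n \<Longrightarrow> t = 0 \<or> lt 0 t"
proof -
  have "\<forall>t\<in>Tn n. t = 0 \<or> lt 0 t" using term_ordering unfolding term_ordering_def by argo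
  then show "t \<in> Tn n \<Longrightarrow> t = 0 \<or> lt 0 t" by blast
qed

sublocale strict_total_on "Tn n" lt
  by unfold_locales (auto intro: lt_trans simp: lt_irrefl lt_total)

lemma pp_dvd_imp_le:
  assumes "s \<in> Tn n" "t \<in> Tn n" "pp_dvd s t"
  shows "s = t \<or> lt s t"
proof -
  have t: "t = (t - s) + s" using assms(3) pp_dvd_iff_add by blast
  consider "t - s = 0" | "lt 0 (t - s)" using zero_least Tn_minus assms(2) by blast
  then show ?thesis
  proof cases
    case 2
    then have "lt (0 + s) ((t - s) + s)" using assms(1) by (rule lt_plus_mono)
    then show ?thesis using t by simp
  qed (use t in simp)
qed

text \<open>Dickson's lemma makes \<open>\<sigma>\<close> a well-ordering: a least element of \<open>X\<close> is found among
  its finitely many divisibility-minimal elements.\<close>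

lemma ex_least:
  assumes X: "X \<subseteq> Tn n" "X \<noteq> {}"
  shows "\<exists>m\<in>X. \<forall>x\<in>X. m = x \<or> lt m x"
proof -
  have M: "dvd_minimal X \<subseteq> X" unfolding dvd_minimal_def by blast
  obtain x where "x \<in> X" using X(2) by blast
  then have "dvd_minimal X \<noteq> {}" using ex_dvd_minimal_dvd by blast
  then obtain m where m: "m \<in> dvd_minimal X" "\<forall>m'\<in>dvd_minimal X. m = m' \<or> lt m m'"
    using finite_has_least finite_dvd_minimal M X(1) by (meson order_trans)
  have "m = x \<or> lt m x" if "x \<in> X" for x
  proof -
    obtain m' where m': "m' \<in> dvd_minimal X" "pp_dvd m' x" using ex_dvd_minimal_dvd \<open>x \<in> X\<close> .
    then have "m' = x \<or> lt m' x" using pp_dvd_imp_le M X(1) that by blast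
    moreover have "m = m' \<or> lt m m'" using m(2) m'(1) by blast
    ultimately show ?thesis using lt_trans by blast
  qed
  then show ?thesis using m(1) M by blast
qed

lemma LT_eqI:
  assumes "t \<in> Poly_Mapping.keys f" "\<And>s. s \<in> Poly_Mapping.keys f \<Longrightarrow> s = t \<or> lt s t"
  shows "LT lt f = t"
  unfolding LT_def
proof (rule the_equality)
  fix t' assume "t' \<in> Poly_Mapping.keys f \<and> (\<forall>s\<in>Poly_Mapping.keys f. s = t' \<or> lt s t')"
  then have "t = t' \<or> lt t t'" "t' = t \<or> lt t' t" using assms by auto
  then show "t' = t" using lt_trans[of t t' t] lt_irrefl[of t] by blast
qed (use assms in blast)

lemma LT_greatest:
  assumes "f \<noteq> 0" "Poly_Mapping.keys f \<subseteq> Tn n"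
  shows "LT lt f \<in> Poly_Mapping.keys f"
    and "s \<in> Poly_Mapping.keys f \<Longrightarrow> s = LT lt f \<or> lt s (LT lt f)"
proof -
  obtain t where "t \<in> Poly_Mapping.keys f" "\<forall>s\<in>Poly_Mapping.keys f. t = s \<or> lt s t"
    using finite_has_greatest[of "Poly_Mapping.keys f"] assms by auto
  then have "t \<in> Poly_Mapping.keys f" "LT lt f = t" by (auto intro!: LT_eqI)
  then show "LT lt f \<in> Poly_Mapping.keys f"
    and "s \<in> Poly_Mapping.keys f \<Longrightarrow> s = LT lt f \<or> lt s (LT lt f)"
    using \<open>\<forall>s\<in>_. t = s \<or> lt s t\<close> by auto
qed

lemma LT_single_mult:
  fixes f :: "('a::comm_semiring_1) mpoly"
  assumes f: "f \<noteq> 0" "Poly_Mapping.keys f \<subseteq> Tn n" and u: "u \<in> Tn n"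
  defines "g \<equiv> Poly_Mapping.single u 1 * f"
  shows "g \<noteq> 0" "LT lt g = u + LT lt f"
proof -
  have lookup_g: "Poly_Mapping.lookup g (u + s) = Poly_Mapping.lookup f s" for s
    unfolding g_def by (simp add: lookup_single_mult_plus)
  have in_g: "u + LT lt f \<in> Poly_Mapping.keys g"
    using LT_greatest(1)[OF f] by (simp add: in_keys_iff lookup_g)
  then show "g \<noteq> 0" by auto
  show "LT lt g = u + LT lt f"
  proof (rule LT_eqI[OF in_g])
    fix k assume "k \<in> Poly_Mapping.keys g"
    then obtain s where s: "k = u + s" "s \<in> Poly_Mapping.keys f"
      using keys_single_mult[of u 1 f] lookup_g unfolding g_def by (auto simp: in_keys_iff)
    then have "s = LT lt f \<or> lt (s + u) (LT lt f + u)" using LT_greatest(2)[OF f] lt_plus_mono u by blast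
    then show "k = u + LT lt f \<or> lt k (u + LT lt f)" using s(1) by (auto simp: add.commute)
  qed
qed

lemma LTs_subset_Tn: "is_ideal n I \<Longrightarrow> LTs lt I \<subseteq> Tn n"
  unfolding LTs_def using LT_greatest(1) ideal_keys by blast

lemma LTs_dvd_closed:
  fixes I :: "('a::comm_ring_1) mpoly set"
  assumes I: "is_ideal n I" and s: "s \<in> LTs lt I" and t: "t \<in> Tn n" "pp_dvd s t"
  shows "t \<in> LTs lt I"
proof -
  obtain f where f: "f \<in> I" "f \<noteq> 0" "s = LT lt f" using s unfolding LTs_def by blast
  let ?g = "Poly_Mapping.single (t - s) 1 * f"
  have "?g \<in> I" using ideal_single_mult I f(1) Tn_minus t(1) by blast
  moreover have "?g \<noteq> 0" "LT lt ?g = (t - s) + s"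
    using LT_single_mult[OF f(2) ideal_keys[OF I f(1)] Tn_minus[OF t(1)]] f(3) by auto
  moreover have "(t - s) + s = t" using t(2) pp_dvd_iff_add by metis
  ultimately show ?thesis unfolding LTs_def by (metis (mono_tags, lifting) mem_Collect_eq)
qed

lemma LT_cancel_less:
  fixes f h :: "('a::field) mpoly"
  assumes f: "f \<noteq> 0" "Poly_Mapping.keys f \<subseteq> Tn n" and h: "h \<noteq> 0" "Poly_Mapping.keys h \<subseteq> Tn n"
    and same: "LT lt h = LT lt f"
  defines "g \<equiv> f - Poly_Mapping.single 0 (Poly_Mapping.lookup f (LT lt f) / Poly_Mapping.lookup h (LT lt f)) * h"
  assumes g: "g \<noteq> 0"
  shows "lt (LT lt g) (LT lt f)"
proof -
  let ?T = "LT lt f" and ?c = "Poly_Mapping.lookup f (LT lt f) / Poly_Mapping.lookup h (LT lt f)"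
  have lookup_g: "Poly_Mapping.lookup g s = Poly_Mapping.lookup f s - ?c * Poly_Mapping.lookup h s" for s
    unfolding g_def using lookup_single_mult_plus[of 0 ?c h s] by (simp add: lookup_minus)
  have "Poly_Mapping.lookup h ?T \<noteq> 0" using LT_greatest(1)[OF h] same by (simp add: in_keys_iff)
  then have "Poly_Mapping.lookup g ?T = 0" by (simp add: lookup_g)
  moreover have keys_g: "Poly_Mapping.keys g \<subseteq> Poly_Mapping.keys f \<union> Poly_Mapping.keys h"
    using lookup_g by (auto simp: in_keys_iff)
  then have LT_g: "LT lt g \<in> Poly_Mapping.keys g" using LT_greatest(1)[OF g] f(2) h(2) by blast
  ultimately have "LT lt g \<noteq> ?T" by (auto simp: in_keys_iff)
  moreover have "LT lt g \<in> Poly_Mapping.keys f \<or> LT lt g \<in> Poly_Mapping.keys h"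
    using LT_g keys_g by blast
  ultimately show ?thesis using LT_greatest(2)[OF f] LT_greatest(2)[OF h] same by auto
qed

lemma LTs_psubset:
  fixes I J :: "('a::field) mpoly set"
  assumes I: "is_ideal n I" and J: "is_ideal n J" and IJ: "I \<subset> J"
  shows "LTs lt I \<subset> LTs lt J"
proof -
  have nz: "g \<noteq> 0" if "g \<in> J - I" for g using that ideal_zero[OF I] by auto
  have keys: "Poly_Mapping.keys g \<subseteq> Tn n" if "g \<in> J" for g using ideal_keys[OF J that] .
  have "\<not> LTs lt J \<subseteq> LTs lt I"
  proof
    assume JI: "LTs lt J \<subseteq> LTs lt I"
    have "LT lt ` (J - I) \<subseteq> LTs lt J" unfolding LTs_def using nz by blast
    then have "LT lt ` (J - I) \<subseteq> Tn n" using LTs_subset_Tn[OF J] by blast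
    moreover have "LT lt ` (J - I) \<noteq> {}" using IJ by blast
    ultimately obtain m where m: "m \<in> LT lt ` (J - I)" "\<forall>x\<in>LT lt ` (J - I). m = x \<or> lt m x"
      using ex_least by blast
    then obtain f where f: "f \<in> J - I" "m = LT lt f" by blast
    have least: "LT lt f = LT lt g \<or> lt (LT lt f) (LT lt g)" if "g \<in> J - I" for g
      using m(2) that unfolding f(2) by blast
    have "LT lt f \<in> LTs lt J" using f(1) nz[OF f(1)] unfolding LTs_def by auto
    then have "LT lt f \<in> LTs lt I" using JI by blast
    then obtain h where h: "h \<in> I" "h \<noteq> 0" "LT lt h = LT lt f" unfolding LTs_def by auto
    define p where "p = Poly_Mapping.single 0
      (Poly_Mapping.lookup f (LT lt f) / Poly_Mapping.lookup h (LT lt f)) * h"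
    have p: "p \<in> I" unfolding p_def using ideal_single_mult[OF I h(1)] by (simp add: Tn_def)
    have "f - p \<in> J" using ideal_diff[OF J] f(1) p IJ by blast
    moreover have "f - p \<notin> I"
    proof
      assume "f - p \<in> I"
      then have "(f - p) + p \<in> I" using ideal_add[OF I] p by blast
      then show False using f(1) by simp
    qed
    ultimately have fp: "f - p \<in> J - I" by blast
    have "lt (LT lt (f - p)) (LT lt f)"
      unfolding p_def using nz[OF f(1)] keys h(2) ideal_keys[OF I h(1)] h(3) nz[OF fp] f(1)
      by (intro LT_cancel_less) (auto simp: p_def)
    then show False using least[OF fp] lt_irrefl lt_trans by metis
  qed
  moreover have "LTs lt I \<subseteq> LTs lt J" using IJ unfolding LTs_def by blast
  ultimately show ?thesis by blast
qed

lemma dvd_minimal_agree_below: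
  assumes AB: "A \<subset> B" and B: "B \<subseteq> Tn n"
    and A_up: "\<And>s t. s \<in> A \<Longrightarrow> t \<in> Tn n \<Longrightarrow> pp_dvd s t \<Longrightarrow> t \<in> A"
  obtains t where "t \<in> dvd_minimal B" "t \<notin> A"
    "{g \<in> dvd_minimal A. lt g t} = {g \<in> dvd_minimal B. lt g t}"
proof -
  have minA: "dvd_minimal A \<subseteq> A" and minB: "dvd_minimal B \<subseteq> B"
    unfolding dvd_minimal_def by auto
  obtain b where b: "b \<in> B" "b \<notin> A" using AB by blast
  then obtain m where m: "m \<in> dvd_minimal B" "pp_dvd m b" using ex_dvd_minimal_dvd by blast
  then have "m \<notin> A" using A_up b B by blast
  then have "dvd_minimal B - A \<noteq> {}" using m(1) by blast
  then obtain t where t: "t \<in> dvd_minimal B - A"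
    and least: "\<forall>g\<in>dvd_minimal B - A. t = g \<or> lt t g"
    using ex_least minB B by (meson Diff_subset subset_trans)
  have below_t_in_A: "g \<in> A" if "g \<in> dvd_minimal B" "lt g t" for g
  proof (rule ccontr)
    assume "g \<notin> A"
    then have "t = g \<or> lt t g" using least that(1) by blast
    then show False using that(2) lt_irrefl lt_trans[of t g t] by blast
  qed
  have minA_minB: "g \<in> dvd_minimal B" if g: "g \<in> dvd_minimal A" "lt g t" for g
  proof -
    have "g \<in> B" using g(1) minA AB by blast
    then obtain g' where g': "g' \<in> dvd_minimal B" "pp_dvd g' g" using ex_dvd_minimal_dvd by blast
    then have "g' = g \<or> lt g' g" using pp_dvd_imp_le minB B \<open>g \<in> B\<close> by blast
    then have "g' \<in> A" using below_t_in_A g'(1) g(2) lt_trans by blast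
    then have "g' = g" using g(1) g'(2) unfolding dvd_minimal_def by blast
    then show ?thesis using g'(1) by simp
  qed
  have "g \<in> dvd_minimal A" if g: "g \<in> dvd_minimal B" "lt g t" for g
  proof -
    have "g \<in> A" using below_t_in_A g by blast
    then obtain g' where g': "g' \<in> dvd_minimal A" "pp_dvd g' g" using ex_dvd_minimal_dvd by blast
    then have "g' = g \<or> lt g' g" using pp_dvd_imp_le minA AB B \<open>g \<in> A\<close> by blast
    then have "g' \<in> dvd_minimal B" using minA_minB g'(1) g(2) lt_trans by blast
    then have "g' = g" using g(1) g'(2) unfolding dvd_minimal_def by blast
    then show ?thesis using g'(1) by simp
  qed
  then show thesis using that t minA_minB by blast
qed

lemma O_sigma_sorted_set:
  assumes "is_ideal n I"
  shows "sorted_wrt lt (O_sigma lt I)" "set (O_sigma lt I) = dvd_minimal (LTs lt I)"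
    "set (O_sigma lt I) \<subseteq> Tn n"
proof -
  have LTs: "LTs lt I \<subseteq> Tn n" using LTs_subset_Tn[OF assms] .
  have min: "dvd_minimal (LTs lt I) \<subseteq> Tn n" using LTs unfolding dvd_minimal_def by blast
  obtain xs where xs: "sorted_wrt lt xs" "set xs = dvd_minimal (LTs lt I)"
    using ex_sorted_list[OF finite_dvd_minimal[OF LTs] min] by blast
  have "O_sigma lt I = xs"
    unfolding O_sigma_def min_gens_def dvd_minimal_def[symmetric]
  proof (rule the_equality)
    fix ys assume "sorted_wrt lt ys \<and> set ys = dvd_minimal (LTs lt I)"
    then show "ys = xs" using sorted_list_unique xs min by metis
  qed (use xs in blast)
  then show "sorted_wrt lt (O_sigma lt I)" "set (O_sigma lt I) = dvd_minimal (LTs lt I)"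
    "set (O_sigma lt I) \<subseteq> Tn n"
    using xs min by simp_all
qed

end

lemma tuple_prec_extension: "tuple_prec lt (p @ t # zs) p"
  unfolding tuple_prec_def by simp

lemma tuple_prec_first_difference: "lt t a \<Longrightarrow> tuple_prec lt (p @ t # zs) (p @ a # zs')"
  unfolding tuple_prec_def by (intro disjI2 exI[of _ "length p"]) simp

theorem corollary4p9:
  fixes n :: nat and lt :: "pp \<Rightarrow> pp \<Rightarrow> bool"
    and I J :: "('a::field) mpoly set"
  assumes "term_ordering n lt"
    and "is_ideal n I" and "is_ideal n J"
    and "I \<subset> J"
  shows "tuple_prec lt (O_sigma lt J) (O_sigma lt I)"
proof -
  interpret term_order n lt by (rule term_order.intro) (fact assms(1))
  obtain t where t: "t \<in> dvd_minimal (LTs lt J)" "t \<notin> LTs lt I"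
    and below: "{g \<in> dvd_minimal (LTs lt I). lt g t} = {g \<in> dvd_minimal (LTs lt J). lt g t}"
    using dvd_minimal_agree_below[OF LTs_psubset[OF assms(2-4)] LTs_subset_Tn[OF assms(3)]]
      LTs_dvd_closed[OF assms(2)] by blast
  note OI = O_sigma_sorted_set[OF assms(2)] and OJ = O_sigma_sorted_set[OF assms(3)]
  have "t \<in> set (O_sigma lt J)" "t \<notin> set (O_sigma lt I)"
    using t OI(2) OJ(2) unfolding dvd_minimal_def by auto
  moreover have "{g \<in> set (O_sigma lt I). lt g t} = {g \<in> set (O_sigma lt J). lt g t}"
    using below OI(2) OJ(2) by simp
  ultimately obtain p zs where "O_sigma lt J = p @ t # zs"
    "O_sigma lt I = p \<or> (\<exists>a zs'. O_sigma lt I = p @ a # zs' \<and> lt t a)"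
    by (rule sorted_lists_split_at[OF OI(1,3) OJ(1,3)])
  then show ?thesis using tuple_prec_extension tuple_prec_first_difference by auto
qed

end
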